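(* Let $b,c\mid n$. For $\underline m\in\mathbb Z^{(b,c)}$ and $w\in\mathbb Z$, the chain map $[\underline m,w]:S^{\lambda_b}\to S^{\lambda_c}$ is chain homotopic to zero if and only if $\sum_im_i+(b,c)w=0$. Consequently, the rule sending the class of $[\underline m,w]$ to $\sum_im_i+(b,c)w$ is a well-defined isomorphism $[S^{\lambda_b},S^{\lambda_c}]\to\mathbb Z$.
   Context: $n$ is a fixed odd positive integer, $C_n$ cyclic of order $n$ with generator $t$; for $d\mid n$, $\Theta_d=C_n/\langle t^d\rangle$, $p$ denotes canonical projections $\Theta_d\to\Theta_e$ ($e\mid d$), $\pi_d:\Theta_d\to\Theta_1$ the projection to a point, and $t$ the action of the generator. $\underline{\mathbb Z}$ is the constant Mackey functor for $C_n$ with value $\mathbb Z$, $\underline{\mathbb Z}$-modules are modules over it, with restriction $f^*$ and transfer $f_*$. $F_d$ is the free $\underline{\mathbb Z}$-module on $g_d\in F_d(\Theta_d)$ ($F_1=\underline{\mathbb Z}$); for $f:\Theta_d\to\Theta_e$, $Rf:F_d\to F_e$ sends $g_d\mapsto f^*(g_e)$ and $If:F_e\to F_d$ sends $g_e\mapsto f_*(g_d)$. For $b\mid n$, $S^{\lambda_b}$ is the chain complex $F_b\xrightarrow{\mathrm{id}-Rt}F_b\xrightarrow{R\pi_b}\underline{\mathbb Z}$ in homological degrees $2,1,0$; $[X,Y]$ denotes morphisms in the derived category of $\underline{\mathbb Z}$-modules (for these bounded free complexes, chain homotopy classes of chain maps). Let $(b,c)$, $[b,c]$ be gcd and lcm.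 For $\underline m=(m_0,\dots,m_{(b,c)-1})\in\mathbb Z^{(b,c)}$, $\langle\underline m\rangle:F_b\to F_c$ is the map $g_b\mapsto\sum_im_i(t_* )^ip_*p^*(g_c)$, where $p^*$ is restriction along $\Theta_{[b,c]}\to\Theta_c$ and $p_*$ transfer along $\Theta_{[b,c]}\to\Theta_b$ (every map $F_b\to F_c$ is uniquely of this form). $I\pi R\pi:F_b\to F_c$ is $I\pi_c\circ R\pi_b$. For $w\in\mathbb Z$, $[\underline m,w]:S^{\lambda_b}\to S^{\lambda_c}$ is the chain map equal to $\langle\underline m\rangle+w\,I\pi R\pi$ in degree 2, $\langle\underline m\rangle$ in degree 1, and multiplication by $\frac{c}{(b,c)}\sum_im_i$ in degree 0; every chain map $S^{\lambda_b}\to S^{\lambda_c}$ has this form. *)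

theory Defs
  imports Main
begin

text \<open>
By Yoshida's theorem, the full subcategory of free
Z-modules (cohomological Mackey functors for C_n) on the orbits Theta_d is the
category of permutation modules Z[Theta_d].  We identify Theta_d with
{0..<d}, the generator t acting by x |-> (x+1) mod d.  An element of
F_c(Theta_d) is a C_n-equivariant integer matrix Theta_c x Theta_d (rows
indexed by Theta_c, columns by Theta_d), and a morphism F_d -> F_e is
identified with the image of g_d, i.e. an element of F_e(Theta_d).
Composition of morphisms is matrix multiplication.
\<close>

type_synonym imat = "nat \<Rightarrow> nat \<Rightarrow> int"

definition hom :: "nat \<Rightarrow> nat \<Rightarrow> imat \<Rightarrow> bool" where
  "hom e d M \<longleftrightarrow>
     (\<forall>y x. (e \<le> y \<or> d \<le> x) \<longrightarrow> M y x = 0) \<and>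
     (\<forall>y<e. \<forall>x<d. M ((y + 1) mod e) ((x + 1) mod d) = M y x)"

definition mcomp :: "nat \<Rightarrow> imat \<Rightarrow> imat \<Rightarrow> imat" where
  "mcomp k N M = (\<lambda>z x. \<Sum>y<k. N z y * M y x)"

definition madd :: "imat \<Rightarrow> imat \<Rightarrow> imat" where
  "madd M N = (\<lambda>y x. M y x + N y x)"

definition msub :: "imat \<Rightarrow> imat \<Rightarrow> imat" where
  "msub M N = (\<lambda>y x. M y x - N y x)"

definition msmult :: "int \<Rightarrow> imat \<Rightarrow> imat" where
  "msmult k M = (\<lambda>y x. k * M y x)"

definition msum :: "nat set \<Rightarrow> (nat \<Rightarrow> imat) \<Rightarrow> imat" where
  "msum A f = (\<lambda>y x. \<Sum>i\<in>A. f i y x)"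

definition idm :: "nat \<Rightarrow> imat" where
  "idm d = (\<lambda>y x. if x < d \<and> y = x then 1 else 0)"

definition transp :: "imat \<Rightarrow> imat" where
  "transp M = (\<lambda>y x. M x y)"

definition proj :: "nat \<Rightarrow> nat \<Rightarrow> nat" where "proj e x = x mod e"
definition ppt :: "nat \<Rightarrow> nat" where "ppt x = 0"
definition tact :: "nat \<Rightarrow> nat \<Rightarrow> nat" where "tact d x = (x + 1) mod d"

definition Lin :: "nat \<Rightarrow> nat \<Rightarrow> (nat \<Rightarrow> nat) \<Rightarrow> imat" where
  "Lin d e f = (\<lambda>y x. if x < d \<and> y < e \<and> f x = y then 1 else 0)"

text \<open>Generator g_c of F_c, in F_c(Theta_c).\<close>
definition gen :: "nat \<Rightarrow> imat" where "gen c = idm c"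

definition restr :: "nat \<Rightarrow> nat \<Rightarrow> (nat \<Rightarrow> nat) \<Rightarrow> imat \<Rightarrow> imat" where
  "restr d e f \<alpha> = mcomp e \<alpha> (Lin d e f)"

definition transf :: "nat \<Rightarrow> nat \<Rightarrow> (nat \<Rightarrow> nat) \<Rightarrow> imat \<Rightarrow> imat" where
  "transf d e f \<beta> = mcomp d \<beta> (transp (Lin d e f))"

definition Rm :: "nat \<Rightarrow> nat \<Rightarrow> (nat \<Rightarrow> nat) \<Rightarrow> imat" where
  "Rm d e f = restr d e f (gen e)"

definition Im :: "nat \<Rightarrow> nat \<Rightarrow> (nat \<Rightarrow> nat) \<Rightarrow> imat" where
  "Im d e f = transf d e f (gen d)"

definition angle :: "nat \<Rightarrow> nat \<Rightarrow> (nat \<Rightarrow> int) \<Rightarrow> imat" where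
  "angle b c m =
     (let L = lcm b c in
      msum {..<gcd b c} (\<lambda>i. msmult (m i)
        ((transf b b (tact b) ^^ i) (transf L b (proj b) (restr L c (proj c) (gen c))))))"

definition IpiRpi :: "nat \<Rightarrow> nat \<Rightarrow> imat" where
  "IpiRpi b c = mcomp 1 (Im c 1 ppt) (Rm b 1 ppt)"

text \<open>Differentials of S^{lambda_b}: F_b --(id - Rt)--> F_b --(R pi_b)--> Z.\<close>
definition dS2 :: "nat \<Rightarrow> imat" where "dS2 b = msub (idm b) (Rm b b (tact b))"
definition dS1 :: "nat \<Rightarrow> imat" where "dS1 b = Rm b 1 ppt"

text \<open>A chain map S^{lambda_b} -> S^{lambda_c} is a triple (f2, f1, f0) of
components in degrees 2, 1, 0.\<close>
type_synonym chmap = "imat \<times> imat \<times> imat"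

definition is_chain_map :: "nat \<Rightarrow> nat \<Rightarrow> chmap \<Rightarrow> bool" where
  "is_chain_map b c f \<longleftrightarrow> (case f of (f2, f1, f0) \<Rightarrow>
     hom c b f2 \<and> hom c b f1 \<and> hom 1 1 f0 \<and>
     mcomp b f1 (dS2 b) = mcomp c (dS2 c) f2 \<and>
     mcomp c (dS1 c) f1 = mcomp 1 f0 (dS1 b))"

definition chain_maps :: "nat \<Rightarrow> nat \<Rightarrow> chmap set" where
  "chain_maps b c = {f. is_chain_map b c f}"

definition null_htpc :: "nat \<Rightarrow> nat \<Rightarrow> chmap \<Rightarrow> bool" where
  "null_htpc b c f \<longleftrightarrow> (case f of (f2, f1, f0) \<Rightarrow>
     (\<exists>h0 h1. hom c 1 h0 \<and> hom c b h1 \<and>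
        f0 = mcomp c (dS1 c) h0 \<and>
        f1 = madd (mcomp c (dS2 c) h1) (mcomp 1 h0 (dS1 b)) \<and>
        f2 = mcomp b h1 (dS2 b)))"

definition chadd :: "chmap \<Rightarrow> chmap \<Rightarrow> chmap" where
  "chadd f g = (case f of (f2, f1, f0) \<Rightarrow> case g of (g2, g1, g0) \<Rightarrow>
     (madd f2 g2, madd f1 g1, madd f0 g0))"

definition chsub :: "chmap \<Rightarrow> chmap \<Rightarrow> chmap" where
  "chsub f g = (case f of (f2, f1, f0) \<Rightarrow> case g of (g2, g1, g0) \<Rightarrow>
     (msub f2 g2, msub f1 g1, msub f0 g0))"

definition htpc_rel :: "nat \<Rightarrow> nat \<Rightarrow> (chmap \<times> chmap) set" where
  "htpc_rel b c = {(f, g). is_chain_map b c f \<and> is_chain_map b c g \<and> null_htpc b c (chsub f g)}"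

definition chm :: "nat \<Rightarrow> nat \<Rightarrow> (nat \<Rightarrow> int) \<Rightarrow> int \<Rightarrow> chmap" where
  "chm b c m w =
     (madd (angle b c m) (msmult w (IpiRpi b c)),
      angle b c m,
      msmult (int (c div gcd b c) * (\<Sum>i<gcd b c. m i)) (idm 1))"

end

theory Submission
  imports Defs "HOL-Number_Theory.Cong"
begin

(* By the Chinese remainder theorem the C_n-orbits of Theta_c x Theta_b are indexed by z - y modulo
   g = gcd b c, so every equivariant matrix F_b -> F_c is circulant, given by a function phi on Z/g.
   In these coordinates both differentials id - R t act as the cyclic difference
   phi(k) - phi(k + 1), and composing with R pi_c gives c/g times the sum of phi.  The cyclic difference has
   the constants as kernel and the functions of sum zero as image.  Hence every chain map is some
   [m, w], and [m, w] is null-homotopic iff m + w is a cyclic difference, i.e. iff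
   sum m + g w = 0.  The sum over k < g of the degree-2 component is thus an additive, surjective
   invariant of chain maps whose fibres are exactly the homotopy classes. *)

section \<open>Residues and cyclic differences\<close>

lemma dvd_of_nat_mod_diff: "g dvd b \<Longrightarrow> int g dvd int (a mod b) - int a"
  by (metis dvd_trans mod_mod_trivial mod_eq_dvd_iff of_nat_dvd_iff of_nat_mod)

lemma chinese_remainder_gcd:
  fixes b c :: nat and u v :: int
  assumes "0 < b" "0 < c" "int (gcd b c) dvd u - v"
  obtains x :: nat where "int c dvd int x - u" "int b dvd int x - v"
proof -
  obtain s t where bezout: "s * int c + t * int b = int (gcd b c)"
    using bezout_int[of "int c" "int b"] by (auto simp: gcd.commute)
  obtain k where k: "u - v = int (gcd b c) * k" using assms(3) by (elim dvdE)
  define x0 where "x0 = u - k * s * int c"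
  have "x0 - v = int (gcd b c) * k - k * s * int c"
    using k unfolding x0_def by simp
  also have "\<dots> = k * t * int b"
    unfolding bezout[symmetric] by (simp add: algebra_simps)
  finally have "x0 - v = k * t * int b" .
  then have x0: "int c dvd x0 - u" "int b dvd x0 - v"
    unfolding x0_def by simp_all
  define x where "x = nat (x0 mod (int b * int c))"
  have "int x = x0 - x0 div (int b * int c) * (int b * int c)"
    unfolding x_def using assms(1,2) by (simp add: minus_div_mult_eq_mod)
  then have "int b * int c dvd int x - x0"
    by simp
  then have "int c dvd int x - x0" "int b dvd int x - x0"
    using dvd_mult_left dvd_mult_right by blast+
  with x0 have "int c dvd (int x - x0) + (x0 - u)" "int b dvd (int x - x0) + (x0 - v)"
    by (simp_all only: dvd_add)
  then show thesis by (intro that) simp_all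
qed

lemma lcm_residues_unique:
  fixes x x' :: nat
  assumes "x < lcm b c" "x' < lcm b c" "x mod b = x' mod b" "x mod c = x' mod c"
  shows "x = x'"
  using assms cong_cong_lcm_nat cong_less_modulus_unique_nat unfolding cong_def by blast

definition diag_index :: "nat \<Rightarrow> nat \<Rightarrow> nat \<Rightarrow> nat" where
  "diag_index g y z = nat ((int z - int y) mod int g)"

lemma diag_index_less: "0 < g \<Longrightarrow> diag_index g y z < g"
  unfolding diag_index_def by (simp add: nat_less_iff)

lemma diag_index_eq_iff:
  "0 < g \<Longrightarrow> diag_index g y z = k \<longleftrightarrow> k < g \<and> int g dvd int z - int y - int k"
  unfolding diag_index_def
  by (metis (no_types, opaque_lifting) mod_eq_dvd_iff mod_pos_pos_trivial nat_eq_iff of_nat_0_le_iff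
      of_nat_0_less_iff of_nat_less_iff pos_mod_bound pos_mod_sign)

lemma diag_index_add:
  assumes g: "0 < g" and dvd: "int g dvd (int z' - int y') - (int z - int y) - int k"
  shows "diag_index g y' z' = (diag_index g y z + k) mod g"
proof -
  let ?d = "diag_index g y z"
  have "int g dvd int z - int y - int ?d"
    using diag_index_eq_iff[OF g] by blast
  moreover have "int g dvd int ((?d + k) mod g) - int (?d + k)"
    by (rule dvd_of_nat_mod_diff) simp
  moreover have "int z' - int y' - int ((?d + k) mod g) =
      ((int z' - int y') - (int z - int y) - int k) + (int z - int y - int ?d)
      - (int ((?d + k) mod g) - int (?d + k))"
    by simp
  ultimately have "int g dvd int z' - int y' - int ((?d + k) mod g)"
    using dvd by (metis dvd_add dvd_diff)
  then show ?thesis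
    using g by (simp add: diag_index_eq_iff)
qed

lemma diag_index_cong:
  "0 < g \<Longrightarrow> int g dvd (int z' - int y') - (int z - int y) \<Longrightarrow>
    diag_index g y' z' = diag_index g y z"
  using diag_index_add[of g z' y' z y 0] diag_index_less[of g y z] by simp

lemma diag_index_Suc_mod_both:
  assumes "0 < g" "g dvd b" "g dvd c"
  shows "diag_index g ((y + 1) mod c) ((z + 1) mod b) = diag_index g y z"
proof (rule diag_index_cong)
  have "int ((z + 1) mod b) - int ((y + 1) mod c) - (int z - int y) =
      (int ((z + 1) mod b) - int (z + 1)) - (int ((y + 1) mod c) - int (y + 1))"
    by simp
  also have "int g dvd \<dots>"
    using assms(2,3) by (intro dvd_diff dvd_of_nat_mod_diff)
  finally show "int g dvd int ((z + 1) mod b) - int ((y + 1) mod c) - (int z - int y)" .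
qed fact

lemma diag_index_Suc_mod_right:
  "0 < g \<Longrightarrow> g dvd b \<Longrightarrow> diag_index g y ((z + 1) mod b) = (diag_index g y z + 1) mod g"
  using dvd_of_nat_mod_diff[of g b "z + 1"] by (intro diag_index_add) (simp_all add: algebra_simps)

lemma diag_index_pred_mod_left:
  assumes "0 < g" "g dvd c" "0 < c"
  shows "diag_index g ((y + c - 1) mod c) z = (diag_index g y z + 1) mod g"
proof (rule diag_index_add)
  have "int g dvd int ((y + c - 1) mod c) - int (y + c - 1)" "int g dvd int c"
    using assms(2) by (simp_all add: dvd_of_nat_mod_diff)
  moreover have "int z - int ((y + c - 1) mod c) - (int z - int y) - int 1 =
      - (int ((y + c - 1) mod c) - int (y + c - 1)) - int c"
    using assms(3) by (simp add: of_nat_diff)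
  ultimately show "int g dvd int z - int ((y + c - 1) mod c) - (int z - int y) - int 1"
    by (metis dvd_diff dvd_minus_iff)
qed fact

lemma diag_index_pred_mod_right:
  assumes "0 < g" "g dvd b" "0 < b"
  shows "diag_index g y ((z + b - 1) mod b) = (diag_index g y z + (g - 1)) mod g"
proof (rule diag_index_add)
  have "int g dvd int ((z + b - 1) mod b) - int (z + b - 1)" "int g dvd int b - int g"
    using assms(2) by (simp_all add: dvd_of_nat_mod_diff)
  moreover have "int ((z + b - 1) mod b) - int y - (int z - int y) - int (g - 1) =
      (int ((z + b - 1) mod b) - int (z + b - 1)) + (int b - int g)"
    using assms by (simp add: of_nat_diff)
  ultimately show "int g dvd int ((z + b - 1) mod b) - int y - (int z - int y) - int (g - 1)"
    by (metis dvd_add)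
qed fact

lemma diag_index_self_inverse:
  assumes "u < g"
  shows "diag_index g (diag_index g u z) z = u"
proof -
  have g: "0 < g" using assms by simp
  have "int g dvd int z - int u - int (diag_index g u z)"
    using diag_index_eq_iff[OF g] by blast
  then have "int g dvd int z - int (diag_index g u z) - int u"
    by (simp add: algebra_simps)
  then show ?thesis
    using diag_index_eq_iff[OF g] assms by blast
qed

lemma sum_lessThan_periodic:
  fixes f :: "nat \<Rightarrow> 'a::semiring_1"
  assumes periodic: "\<And>x. f (x + p) = f x"
  shows "sum f {..<q * p} = of_nat q * sum f {..<p}"
proof -
  have shift: "f (x + i * p) = f x" for x i
  proof (induction i)
    case (Suc i)
    have "f (x + Suc i * p) = f ((x + i * p) + p)" by (simp add: algebra_simps)
    with Suc show ?case by (simp add: periodic)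
  qed simp
  have "sum f {i * p..<i * p + p} = sum f {..<p}" for i
    using sum.shift_bounds_nat_ivl[of f 0 "i * p" p]
    by (simp add: shift atLeast0LessThan add.commute)
  then have "sum f {..<q * p} = (\<Sum>i<q. sum f {..<p})"
    using sum.nat_group[of f p q] by simp
  then show ?thesis by simp
qed

lemma sum_diag_index_column:
  fixes \<phi> :: "nat \<Rightarrow> int"
  assumes g: "0 < g" and "g dvd c"
  shows "(\<Sum>u<c. \<phi> (diag_index g u z)) = int (c div g) * (\<Sum>k<g. \<phi> k)"
proof -
  have "(\<Sum>u<g. \<phi> (diag_index g u z)) = (\<Sum>k<g. \<phi> k)"
    by (rule sum.reindex_bij_witness[where i="\<lambda>k. diag_index g k z" and j="\<lambda>u. diag_index g u z"])
      (simp_all add: diag_index_self_inverse diag_index_less g)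
  moreover have "\<phi> (diag_index g (u + g) z) = \<phi> (diag_index g u z)" for u
    using diag_index_cong[OF g, where y'="u + g" and z'=z and y=u and z=z] by simp
  ultimately show ?thesis
    using sum_lessThan_periodic[of "\<lambda>u. \<phi> (diag_index g u z)" g "c div g"] \<open>g dvd c\<close> by simp
qed

definition cyc_diff :: "nat \<Rightarrow> (nat \<Rightarrow> int) \<Rightarrow> nat \<Rightarrow> int" where
  "cyc_diff g \<phi> k = \<phi> k - \<phi> ((k + 1) mod g)"

lemma sum_cyc_diff:
  assumes "0 < g"
  shows "(\<Sum>k<g. cyc_diff g \<phi> k) = 0"
proof -
  obtain g' where g: "g = Suc g'" using assms gr0_implies_Suc by blast
  have "(\<Sum>k<g. \<phi> ((k + 1) mod g)) = (\<Sum>k<g'. \<phi> ((k + 1) mod g)) + \<phi> 0"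
    by (simp add: g)
  also have "\<dots> = (\<Sum>k<g'. \<phi> (Suc k)) + \<phi> 0"
    by (simp add: g)
  also have "\<dots> = (\<Sum>k<g. \<phi> k)"
    unfolding g sum.lessThan_Suc_shift by simp
  finally show ?thesis
    unfolding cyc_diff_def by (simp add: sum_subtractf)
qed

lemma cyc_diff_eq_imp_shift:
  assumes "\<forall>k<g. cyc_diff g \<phi> k = cyc_diff g \<psi> k" and "k < g"
  shows "\<psi> k = \<phi> k + (\<psi> 0 - \<phi> 0)"
  using \<open>k < g\<close>
proof (induction k)
  case (Suc k)
  then have "\<phi> k - \<phi> (Suc k) = \<psi> k - \<psi> (Suc k)"
    using assms(1) mod_less[OF Suc.prems] unfolding cyc_diff_def by (metis Suc_eq_plus1 Suc_lessD)
  with Suc show ?case by simp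
qed simp

lemma cyc_diff_solvable:
  assumes "(\<Sum>k<g. \<chi> k) = 0"
  shows "\<exists>\<psi>. \<forall>k<g. cyc_diff g \<psi> k = \<chi> k"
proof
  show "\<forall>k<g. cyc_diff g (\<lambda>k. - (\<Sum>j<k. \<chi> j)) k = \<chi> k"
  proof (intro allI impI)
    fix k assume "k < g"
    show "cyc_diff g (\<lambda>k. - (\<Sum>j<k. \<chi> j)) k = \<chi> k"
    proof (cases "k + 1 = g")
      case True
      then show ?thesis
        using assms unfolding cyc_diff_def by (auto simp: add.commute)
    next
      case False
      with \<open>k < g\<close> show ?thesis unfolding cyc_diff_def by simp
    qed
  qed
qed

section \<open>Circulant matrices\<close>

definition circulant :: "nat \<Rightarrow> nat \<Rightarrow> (nat \<Rightarrow> int) \<Rightarrow> imat" where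
  "circulant c b \<phi> = (\<lambda>y z. if y < c \<and> z < b then \<phi> (diag_index (gcd b c) y z) else 0)"

lemma hom_circulant: "0 < b \<Longrightarrow> hom c b (circulant c b \<phi>)"
  unfolding hom_def circulant_def using diag_index_Suc_mod_both[of "gcd b c" b c] by auto

lemma circulant_row0:
  assumes "0 < b" "0 < c" "k < gcd b c"
  shows "circulant c b \<phi> 0 k = \<phi> k"
proof -
  have "gcd b c \<le> b" using assms(1) by simp
  then have "k < b" using assms(3) by linarith
  moreover have "diag_index (gcd b c) 0 k = k" using assms by (simp add: diag_index_eq_iff)
  ultimately show ?thesis using assms unfolding circulant_def by simp
qed

lemma circulant_eq_iff:
  assumes "0 < b" "0 < c"
  shows "circulant c b \<phi> = circulant c b \<psi> \<longleftrightarrow> (\<forall>k<gcd b c. \<phi> k = \<psi> k)"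
proof
  show "circulant c b \<phi> = circulant c b \<psi> \<Longrightarrow> \<forall>k<gcd b c. \<phi> k = \<psi> k"
    using circulant_row0[OF assms] by metis
  show "\<forall>k<gcd b c. \<phi> k = \<psi> k \<Longrightarrow> circulant c b \<phi> = circulant c b \<psi>"
    unfolding circulant_def using diag_index_less[of "gcd b c"] assms by (auto intro!: ext)
qed

lemma hom_shift_iterate:
  assumes "hom c b M" "y < c" "x < b"
  shows "M ((y + j) mod c) ((x + j) mod b) = M y x"
proof (induction j)
  case (Suc j)
  have "(y + j) mod c < c" "(x + j) mod b < b"
    using assms by simp_all
  then have "M (((y + j) mod c + 1) mod c) (((x + j) mod b + 1) mod b) =
      M ((y + j) mod c) ((x + j) mod b)"
    using assms(1) unfolding hom_def by blast
  then show ?case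
    using Suc by (simp add: mod_Suc_eq)
qed (use assms in simp)

lemma hom_imp_circulant:
  assumes hom: "hom c b M" and "0 < b" "0 < c"
  shows "M = circulant c b (\<lambda>k. M 0 k)"
proof (intro ext)
  fix y z
  show "M y z = circulant c b (\<lambda>k. M 0 k) y z"
  proof (cases "y < c \<and> z < b")
    case False
    then show ?thesis using hom unfolding hom_def circulant_def by auto
  next
    case True
    define k where "k = diag_index (gcd b c) y z"
    have "k < gcd b c" "int (gcd b c) dvd int z - int y - int k"
      using diag_index_eq_iff[of "gcd b c" y z k] assms(2) k_def by simp_all
    moreover have "gcd b c \<le> b" using assms(2) by simp
    ultimately have k: "k < b" "int (gcd b c) dvd (- int y) - (int k - int z)"
      by (simp_all add: algebra_simps)
    obtain j where "int c dvd int j - (- int y)" "int b dvd int j - (int k - int z)"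
      using chinese_remainder_gcd[OF assms(2,3) k(2)] .
    then have "c dvd y + j" "[z + j = k] (mod b)"
      by (simp_all add: algebra_simps cong_iff_dvd_diff
          flip: of_nat_add of_nat_dvd_iff cong_int_iff)
    then have "(y + j) mod c = 0" "(z + j) mod b = k"
      using k(1) by (simp_all add: cong_def)
    then have "M y z = M 0 k"
      using hom_shift_iterate[OF hom, of y z j] True by simp
    then show ?thesis
      using True unfolding circulant_def k_def by simp
  qed
qed

lemma madd_circulant: "madd (circulant c b \<phi>) (circulant c b \<psi>) = circulant c b (\<lambda>k. \<phi> k + \<psi> k)"
  unfolding madd_def circulant_def by (auto intro!: ext)

lemma msub_circulant: "msub (circulant c b \<phi>) (circulant c b \<psi>) = circulant c b (\<lambda>k. \<phi> k - \<psi> k)"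
  unfolding msub_def circulant_def by (auto intro!: ext)

lemma msmult_circulant: "msmult a (circulant c b \<phi>) = circulant c b (\<lambda>k. a * \<phi> k)"
  unfolding msmult_def circulant_def by (auto intro!: ext)

lemma msum_circulant: "msum A (\<lambda>i. circulant c b (\<phi> i)) = circulant c b (\<lambda>k. \<Sum>i\<in>A. \<phi> i k)"
  unfolding msum_def circulant_def by (auto intro!: ext)

section \<open>The structure maps in circulant form\<close>

lemma mcomp_idm_left: "mcomp e (idm e) M = (\<lambda>z x. if z < e then M z x else 0)"
proof (intro ext)
  fix z x
  have "(\<Sum>y<e. idm e z y * M y x) = (\<Sum>y<e. if y = z then M y x else 0)"
    by (rule sum.cong) (auto simp: idm_def)
  then show "mcomp e (idm e) M z x = (if z < e then M z x else 0)"
    unfolding mcomp_def by simp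
qed

lemma eq_Suc_mod_iff:
  fixes y u c :: nat
  assumes "y < c" "u < c"
  shows "y = (u + 1) mod c \<longleftrightarrow> u = (y + c - 1) mod c"
proof (cases "u + 1 < c")
  case True
  then show ?thesis
    using assms by (cases y) auto
next
  case False
  then have "u = c - 1" using assms by simp
  then show ?thesis using assms by (cases y) (auto simp: mod_if)
qed

lemma sum_mult_delta:
  "(\<Sum>u<(b::nat). f u * (if P \<and> u = a then 1 else 0)) = (if P \<and> a < b then f a else (0::int))"
proof (cases P)
  case True
  have "(\<Sum>u<b. f u * (if P \<and> u = a then 1 else 0)) = (\<Sum>u<b. if u = a then f u else 0)"
    by (rule sum.cong) (auto simp: True)
  then show ?thesis using True by simp
qed simp

lemma sum_delta_mult:
  "(\<Sum>u<(b::nat). (if P \<and> u = a then 1 else 0) * f u) = (if P \<and> a < b then f a else (0::int))"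
  using sum_mult_delta[of f P a b] by (simp add: mult.commute)

lemma dS2_eq:
  "0 < b \<Longrightarrow> dS2 b = (\<lambda>u z.
     (if z < b \<and> u = z then 1 else 0) - (if z < b \<and> u = (z + 1) mod b then 1 else 0))"
proof -
  have "Rm b b (tact b) = (\<lambda>u z. if z < b \<and> u < b \<and> u = (z + 1) mod b then 1 else 0)"
    unfolding Rm_def restr_def gen_def mcomp_idm_left Lin_def tact_def by (auto intro!: ext)
  then show ?thesis
    unfolding dS2_def msub_def idm_def by (auto intro!: ext)
qed

lemma dS2_row_eq:
  "0 < c \<Longrightarrow> dS2 c y u =
     (if y < c \<and> u = y then 1 else 0) - (if y < c \<and> u = (y + c - 1) mod c then 1 else 0)"
  unfolding dS2_eq using eq_Suc_mod_iff[of y c u] by auto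

lemma dS1_eq: "dS1 b = (\<lambda>y x. if x < b \<and> y = 0 then 1 else 0)"
  unfolding dS1_def Rm_def restr_def gen_def mcomp_idm_left Lin_def ppt_def by (auto intro!: ext)

lemma IpiRpi_eq_circulant: "IpiRpi b c = circulant c b (\<lambda>_. 1)"
proof -
  have "Im c 1 ppt = (\<lambda>z x. if z < c \<and> x = 0 then 1 else 0)"
    unfolding Im_def transf_def gen_def mcomp_idm_left Lin_def ppt_def transp_def
    by (auto intro!: ext)
  then show ?thesis
    unfolding IpiRpi_def circulant_def dS1_eq[unfolded dS1_def] mcomp_def by (auto intro!: ext)
qed

lemma mcomp_circulant_dS2:
  assumes "0 < b" "0 < c"
  shows "mcomp b (circulant c b \<phi>) (dS2 b) = circulant c b (cyc_diff (gcd b c) \<phi>)"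
proof (intro ext)
  fix y z
  have "mcomp b (circulant c b \<phi>) (dS2 b) y z =
      (if z < b then circulant c b \<phi> y z - circulant c b \<phi> y ((z + 1) mod b) else 0)"
    unfolding mcomp_def dS2_eq[OF assms(1)] using assms(1)
    by (simp add: right_diff_distrib sum_subtractf sum_mult_delta)
  then show "mcomp b (circulant c b \<phi>) (dS2 b) y z = circulant c b (cyc_diff (gcd b c) \<phi>) y z"
    using assms diag_index_Suc_mod_right[of "gcd b c" b y z]
    by (auto simp: circulant_def cyc_diff_def)
qed

lemma mcomp_dS2_circulant:
  assumes "0 < b" "0 < c"
  shows "mcomp c (dS2 c) (circulant c b \<phi>) = circulant c b (cyc_diff (gcd b c) \<phi>)"
proof (intro ext)
  fix y z
  have "mcomp c (dS2 c) (circulant c b \<phi>) y z =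
      (if y < c then circulant c b \<phi> y z - circulant c b \<phi> ((y + c - 1) mod c) z else 0)"
    unfolding mcomp_def dS2_row_eq[OF assms(2)] using assms(2)
    by (simp add: left_diff_distrib sum_subtractf sum_delta_mult)
  then show "mcomp c (dS2 c) (circulant c b \<phi>) y z = circulant c b (cyc_diff (gcd b c) \<phi>) y z"
    using assms diag_index_pred_mod_left[of "gcd b c" c y z]
    by (auto simp: circulant_def cyc_diff_def)
qed

lemma mcomp_dS1_circulant:
  assumes "0 < b" "0 < c"
  shows "mcomp c (dS1 c) (circulant c b \<phi>) =
    (\<lambda>y z. if y = 0 \<and> z < b then int (c div gcd b c) * (\<Sum>k<gcd b c. \<phi> k) else 0)"
proof (intro ext)
  fix y z
  have "mcomp c (dS1 c) (circulant c b \<phi>) y z =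
      (if y = 0 \<and> z < b then (\<Sum>u<c. \<phi> (diag_index (gcd b c) u z)) else 0)"
    unfolding mcomp_def dS1_eq circulant_def by auto
  then show "mcomp c (dS1 c) (circulant c b \<phi>) y z =
      (if y = 0 \<and> z < b then int (c div gcd b c) * (\<Sum>k<gcd b c. \<phi> k) else 0)"
    using sum_diag_index_column[of "gcd b c" c] assms by simp
qed

lemma mcomp_scalar_dS1:
  "mcomp 1 (msmult s (idm 1)) (dS1 b) = (\<lambda>y z. if y = 0 \<and> z < b then s else 0)"
  unfolding mcomp_def msmult_def idm_def dS1_eq by (simp add: fun_eq_iff)

lemma sum_residue_indicator:
  assumes "0 < b" "0 < c" "y < c" "z < b"
  shows "(\<Sum>x<lcm b c. if x mod c = y \<and> x mod b = z then 1 else 0) =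
    (if int (gcd b c) dvd int z - int y then 1 else (0::int))"
proof (cases "int (gcd b c) dvd int z - int y")
  case True
  then have "int (gcd b c) dvd int y - int z"
    by (simp add: dvd_diff_commute)
  then obtain x where "int c dvd int x - int y" "int b dvd int x - int z"
    using chinese_remainder_gcd[OF assms(1,2)] by blast
  then have "[x = y] (mod c)" "[x = z] (mod b)"
    by (simp_all add: cong_iff_dvd_diff flip: cong_int_iff)
  define x0 where "x0 = x mod lcm b c"
  have x0: "x0 < lcm b c" "x0 mod c = y" "x0 mod b = z"
    using assms \<open>[x = y] (mod c)\<close> \<open>[x = z] (mod b)\<close>
    by (simp_all add: x0_def lcm_pos_nat mod_mod_cancel cong_def)
  have "(\<Sum>x<lcm b c. if x mod c = y \<and> x mod b = z then 1 else 0) =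
      (\<Sum>x<lcm b c. if x = x0 then 1 else (0::int))"
  proof (intro sum.cong refl)
    fix x assume "x \<in> {..<lcm b c}"
    then have "x mod c = y \<and> x mod b = z \<longleftrightarrow> x = x0"
      using x0 lcm_residues_unique[of x b c x0] by auto
    then show "(if x mod c = y \<and> x mod b = z then 1 else 0) = (if x = x0 then 1 else (0::int))"
      by simp
  qed
  then show ?thesis
    using True x0(1) by simp
next
  case False
  have "\<not> (x mod c = y \<and> x mod b = z)" for x
  proof
    assume "x mod c = y \<and> x mod b = z"
    moreover have "int (gcd b c) dvd (int (x mod b) - int x) - (int (x mod c) - int x)"
      by (intro dvd_diff dvd_of_nat_mod_diff) simp_all
    ultimately show False
      using False by simp
  qed
  then show ?thesis
    using False by (auto intro!: sum.neutral)
qed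

lemma transf_restr_gen_eq:
  assumes "0 < b" "0 < c"
  shows "transf (lcm b c) b (proj b) (restr (lcm b c) c (proj c) (gen c)) =
    circulant c b (\<lambda>k. if k = 0 then 1 else 0)"
proof (intro ext)
  fix y z
  have restr: "restr (lcm b c) c (proj c) (gen c) =
      (\<lambda>y x. if x < lcm b c \<and> y < c \<and> x mod c = y then 1 else 0)"
    unfolding restr_def gen_def mcomp_idm_left Lin_def proj_def by (auto intro!: ext)
  have "transf (lcm b c) b (proj b) (restr (lcm b c) c (proj c) (gen c)) y z =
      (\<Sum>x<lcm b c. if y < c \<and> z < b \<and> x mod c = y \<and> x mod b = z then 1 else 0)"
    unfolding transf_def mcomp_def transp_def Lin_def proj_def restr by (intro sum.cong) auto
  then show "transf (lcm b c) b (proj b) (restr (lcm b c) c (proj c) (gen c)) y z =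
      circulant c b (\<lambda>k. if k = 0 then 1 else 0) y z"
    using assms by (cases "y < c"; cases "z < b")
      (simp_all add: sum_residue_indicator circulant_def diag_index_eq_iff)
qed

lemma transf_tact_circulant:
  assumes "0 < b" "0 < c"
  shows "transf b b (tact b) (circulant c b \<phi>) =
    circulant c b (\<lambda>k. \<phi> ((k + (gcd b c - 1)) mod gcd b c))"
proof (intro ext)
  fix y v
  have "transf b b (tact b) (circulant c b \<phi>) y v =
      (\<Sum>u<b. circulant c b \<phi> y u * (if v < b \<and> u = (v + b - 1) mod b then 1 else 0))"
  proof (unfold transf_def mcomp_def transp_def Lin_def tact_def, intro sum.cong refl)
    fix u assume "u \<in> {..<b}"
    then have "(u < b \<and> v < b \<and> (u + 1) mod b = v) \<longleftrightarrow> (v < b \<and> u = (v + b - 1) mod b)"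
      using eq_Suc_mod_iff[of v b u] by auto
    then show "circulant c b \<phi> y u * (if u < b \<and> v < b \<and> (u + 1) mod b = v then 1 else 0) =
        circulant c b \<phi> y u * (if v < b \<and> u = (v + b - 1) mod b then 1 else 0)"
      by simp
  qed
  also have "\<dots> = (if v < b then circulant c b \<phi> y ((v + b - 1) mod b) else 0)"
    using assms(1) by (simp add: sum_mult_delta)
  finally show "transf b b (tact b) (circulant c b \<phi>) y v =
      circulant c b (\<lambda>k. \<phi> ((k + (gcd b c - 1)) mod gcd b c)) y v"
    using assms diag_index_pred_mod_right[of "gcd b c" b y v] by (simp add: circulant_def)
qed

lemma transf_tact_power_delta:
  assumes "0 < b" "0 < c" "i < gcd b c"
  shows "(transf b b (tact b) ^^ i) (circulant c b (\<lambda>k. if k = 0 then 1 else 0)) =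
    circulant c b (\<lambda>k. if k = i then 1 else 0)"
  using \<open>i < gcd b c\<close>
proof (induction i)
  case (Suc i)
  have "k = Suc i \<longleftrightarrow> (k + (gcd b c - 1)) mod gcd b c = i" if "k < gcd b c" for k
    using eq_Suc_mod_iff[OF that, of i] Suc.prems by auto
  then show ?case
    using Suc assms(1,2) by (simp add: transf_tact_circulant circulant_eq_iff)
qed simp

lemma angle_eq_circulant:
  assumes "0 < b" "0 < c"
  shows "angle b c m = circulant c b m"
proof -
  have "angle b c m = msum {..<gcd b c} (\<lambda>i. circulant c b (\<lambda>k. m i * (if k = i then 1 else 0)))"
    unfolding angle_def Let_def transf_restr_gen_eq[OF assms] msmult_circulant[symmetric]
    using transf_tact_power_delta[OF assms] by (simp add: msum_def)
  also have "\<dots> = circulant c b m"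
  proof -
    have "(\<Sum>i<gcd b c. m i * (if k = i then 1 else 0)) = (\<Sum>i<gcd b c. if i = k then m i else 0)"
      for k
      by (intro sum.cong) auto
    then show ?thesis
      unfolding msum_circulant using assms by (simp add: circulant_eq_iff)
  qed
  finally show ?thesis .
qed

section \<open>Chain maps, null-homotopies and homotopy classes\<close>

lemma hom_point_scalar: "hom 1 1 (msmult s (idm 1))"
  unfolding hom_def msmult_def idm_def by auto

lemma hom_point_imp_scalar:
  assumes "hom 1 1 M"
  shows "M = msmult (M 0 0) (idm 1)"
proof (intro ext)
  fix y x
  show "M y x = msmult (M 0 0) (idm 1) y x"
    using assms unfolding hom_def msmult_def idm_def
    by (cases "y = 0"; cases "x = 0") auto
qed

lemma mcomp_column_dS1: "mcomp 1 (circulant c 1 (\<lambda>_. a)) (dS1 b) = circulant c b (\<lambda>_. a)"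
  unfolding mcomp_def dS1_eq circulant_def by (auto intro!: ext)

lemma chm_eq_circulants:
  assumes "0 < b" "0 < c"
  shows "chm b c m w = (circulant c b (\<lambda>k. m k + w), circulant c b m,
    msmult (int (c div gcd b c) * (\<Sum>k<gcd b c. m k)) (idm 1))"
  unfolding chm_def angle_eq_circulant[OF assms] IpiRpi_eq_circulant msmult_circulant madd_circulant
  by simp

lemma chain_map_chm:
  assumes "0 < b" "0 < c"
  shows "is_chain_map b c (chm b c m w)"
proof -
  have "cyc_diff (gcd b c) (\<lambda>k. m k + w) = cyc_diff (gcd b c) m"
    by (simp add: cyc_diff_def fun_eq_iff)
  then show ?thesis
    unfolding is_chain_map_def chm_eq_circulants[OF assms] prod.case
    using assms hom_point_scalar mcomp_scalar_dS1
    by (simp add: hom_circulant mcomp_circulant_dS2 mcomp_dS2_circulant mcomp_dS1_circulant)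
qed

lemma chain_map_imp_chm:
  assumes pos: "0 < b" "0 < c" and "is_chain_map b c f"
  shows "\<exists>m w. f = chm b c m w"
proof -
  obtain f2 f1 f0 where f: "f = (f2, f1, f0)" by (cases f)
  have "hom c b f2" "hom c b f1" "hom 1 1 f0"
    and d2: "mcomp b f1 (dS2 b) = mcomp c (dS2 c) f2"
    and d1: "mcomp c (dS1 c) f1 = mcomp 1 f0 (dS1 b)"
    using assms(3) unfolding is_chain_map_def f by auto
  then have f0: "f0 = msmult (f0 0 0) (idm 1)"
    by (intro hom_point_imp_scalar)
  have f1: "f1 = circulant c b (\<lambda>k. f1 0 k)" and f2: "f2 = circulant c b (\<lambda>k. f2 0 k)"
    using \<open>hom c b f1\<close> \<open>hom c b f2\<close> pos by (simp_all add: hom_imp_circulant)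
  define w where "w = f2 0 0 - f1 0 0"
  have "\<forall>k<gcd b c. cyc_diff (gcd b c) (\<lambda>k. f1 0 k) k = cyc_diff (gcd b c) (\<lambda>k. f2 0 k) k"
    using d2 pos by (subst (asm) f1, subst (asm) f2)
      (simp add: mcomp_circulant_dS2 mcomp_dS2_circulant circulant_eq_iff)
  then have "\<forall>k<gcd b c. f2 0 k = f1 0 k + w"
    unfolding w_def using cyc_diff_eq_imp_shift by blast
  then have "f2 = circulant c b (\<lambda>k. f1 0 k + w)"
    using pos by (subst f2) (simp add: circulant_eq_iff)
  moreover have "f0 0 0 = int (c div gcd b c) * (\<Sum>k<gcd b c. f1 0 k)"
  proof -
    have "mcomp 1 f0 (dS1 b) 0 0 = f0 0 0"
      using pos by (simp add: mcomp_def dS1_eq)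
    moreover have "mcomp c (dS1 c) f1 0 0 = int (c div gcd b c) * (\<Sum>k<gcd b c. f1 0 k)"
      using pos by (subst f1) (simp add: mcomp_dS1_circulant)
    ultimately show ?thesis
      using d1 by metis
  qed
  ultimately have "f = chm b c (\<lambda>k. f1 0 k) w"
    unfolding f chm_eq_circulants[OF pos] using f0 f1 by simp
  then show ?thesis by blast
qed

lemma chain_maps_eq: "0 < b \<Longrightarrow> 0 < c \<Longrightarrow> chain_maps b c = {chm b c m w | m w. True}"
  unfolding chain_maps_def using chain_map_chm chain_map_imp_chm by blast

lemma null_htpc_chm_iff:
  assumes pos: "0 < b" "0 < c"
  shows "null_htpc b c (chm b c m w) \<longleftrightarrow> (\<Sum>k<gcd b c. m k) + int (gcd b c) * w = 0"
proof
  assume "null_htpc b c (chm b c m w)"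
  then obtain h1 where "hom c b h1" and "circulant c b (\<lambda>k. m k + w) = mcomp b h1 (dS2 b)"
    unfolding null_htpc_def chm_eq_circulants[OF pos] by auto
  moreover have "h1 = circulant c b (\<lambda>k. h1 0 k)"
    using \<open>hom c b h1\<close> pos by (simp add: hom_imp_circulant)
  ultimately have "circulant c b (\<lambda>k. m k + w) = circulant c b (cyc_diff (gcd b c) (\<lambda>k. h1 0 k))"
    using pos by (metis mcomp_circulant_dS2)
  then have "(\<Sum>k<gcd b c. m k + w) = (\<Sum>k<gcd b c. cyc_diff (gcd b c) (\<lambda>k. h1 0 k) k)"
    using pos by (intro sum.cong) (simp_all add: circulant_eq_iff)
  then show "(\<Sum>k<gcd b c. m k) + int (gcd b c) * w = 0"
    using pos by (simp add: sum_cyc_diff sum.distrib)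
next
  assume "(\<Sum>k<gcd b c. m k) + int (gcd b c) * w = 0"
  then have sum_m: "(\<Sum>k<gcd b c. m k) = - int (gcd b c) * w" and "(\<Sum>k<gcd b c. m k + w) = 0"
    by (simp_all add: sum.distrib)
  then obtain \<psi> where \<psi>: "\<forall>k<gcd b c. cyc_diff (gcd b c) \<psi> k = m k + w"
    using cyc_diff_solvable by blast
  define h1 where "h1 = circulant c b \<psi>"
  \<comment> \<open>\<open>h1\<close> contributes \<open>m + w\<close> in degree 1; \<open>h0\<close> removes the constant \<open>w\<close>.\<close>
  define h0 where "h0 = circulant c 1 (\<lambda>_. - w)"
  have "hom c 1 h0" "hom c b h1"
    unfolding h0_def h1_def using pos by (simp_all add: hom_circulant)
  moreover have "circulant c b (\<lambda>k. m k + w) = mcomp b h1 (dS2 b)"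
    and d2: "mcomp c (dS2 c) h1 = circulant c b (\<lambda>k. m k + w)"
    unfolding h1_def using pos \<psi>
    by (simp_all add: mcomp_circulant_dS2 mcomp_dS2_circulant circulant_eq_iff)
  moreover have "msmult (int (c div gcd b c) * (\<Sum>k<gcd b c. m k)) (idm 1) = mcomp c (dS1 c) h0"
  proof -
    have "int (c div gcd b c) * (- int (gcd b c) * w) = - int c * w"
      by (metis dvd_div_mult_self gcd_dvd2 mult.assoc mult.commute mult_minus_left of_nat_mult)
    then show ?thesis
      unfolding h0_def sum_m using pos mcomp_dS1_circulant[of 1 c "\<lambda>_. - w"]
      by (auto simp: msmult_def idm_def fun_eq_iff)
  qed
  moreover have "circulant c b m = madd (mcomp c (dS2 c) h1) (mcomp 1 h0 (dS1 b))"
    unfolding d2 h0_def mcomp_column_dS1 madd_circulant by simp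
  ultimately show "null_htpc b c (chm b c m w)"
    unfolding null_htpc_def chm_eq_circulants[OF pos] prod.case by blast
qed

lemma chadd_chm:
  assumes "0 < b" "0 < c"
  shows "chadd (chm b c m w) (chm b c m' w') = chm b c (\<lambda>k. m k + m' k) (w + w')"
  unfolding chadd_def chm_eq_circulants[OF assms] prod.case madd_circulant
  by (simp add: madd_def msmult_def sum.distrib algebra_simps)

lemma chsub_chm:
  assumes "0 < b" "0 < c"
  shows "chsub (chm b c m w) (chm b c m' w') = chm b c (\<lambda>k. m k - m' k) (w - w')"
  unfolding chsub_def chm_eq_circulants[OF assms] prod.case msub_circulant
  by (simp add: msub_def msmult_def sum_subtractf algebra_simps)

definition htpy_index :: "nat \<Rightarrow> nat \<Rightarrow> chmap \<Rightarrow> int" where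
  "htpy_index b c f = (\<Sum>k<gcd b c. fst f 0 k)"

lemma htpy_index_chm:
  assumes "0 < b" "0 < c"
  shows "htpy_index b c (chm b c m w) = (\<Sum>k<gcd b c. m k) + int (gcd b c) * w"
  unfolding htpy_index_def chm_eq_circulants[OF assms]
  using assms by (simp add: circulant_row0 sum.distrib)

lemma htpy_index_chadd: "htpy_index b c (chadd f g) = htpy_index b c f + htpy_index b c g"
  unfolding htpy_index_def chadd_def madd_def by (simp add: case_prod_beta sum.distrib)

lemma htpc_rel_eq:
  assumes "0 < b" "0 < c"
  shows "htpc_rel b c =
    {(f, g). f \<in> chain_maps b c \<and> g \<in> chain_maps b c \<and> htpy_index b c f = htpy_index b c g}"
proof -
  have "null_htpc b c (chsub f g) \<longleftrightarrow> htpy_index b c f = htpy_index b c g"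
    if f: "f \<in> chain_maps b c" and g: "g \<in> chain_maps b c" for f g
  proof -
    obtain m w m' w' where fg: "f = chm b c m w" "g = chm b c m' w'"
      using f g chain_maps_eq[OF assms] by blast
    have "null_htpc b c (chsub f g) \<longleftrightarrow>
        (\<Sum>k<gcd b c. m k - m' k) + int (gcd b c) * (w - w') = 0"
      unfolding fg chsub_chm[OF assms] null_htpc_chm_iff[OF assms] ..
    also have "\<dots> \<longleftrightarrow> htpy_index b c f = htpy_index b c g"
      unfolding fg htpy_index_chm[OF assms] sum_subtractf right_diff_distrib by linarith
    finally show ?thesis .
  qed
  then show ?thesis
    unfolding htpc_rel_def chain_maps_def by blast
qed

lemma image_class_invariant:
  assumes "R = {(x, y). x \<in> A \<and> y \<in> A \<and> \<sigma> x = \<sigma> y}" and "x \<in> A"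
  shows "\<sigma> ` (R `` {x}) = {\<sigma> x}"
proof -
  have "R `` {x} = {y \<in> A. \<sigma> y = \<sigma> x}"
    using assms by auto
  then show ?thesis
    using assms(2) by auto
qed

lemma bij_betw_quotient_invariant:
  assumes R: "R = {(x, y). x \<in> A \<and> y \<in> A \<and> \<sigma> x = \<sigma> y}"
  shows "bij_betw (\<lambda>X. the_elem (\<sigma> ` X)) (A // R) (\<sigma> ` A)"
proof (rule bij_betw_imageI)
  have class_value: "the_elem (\<sigma> ` (R `` {x})) = \<sigma> x" if "x \<in> A" for x
    using image_class_invariant[OF R that] by simp
  show "inj_on (\<lambda>X. the_elem (\<sigma> ` X)) (A // R)"
  proof (rule inj_onI)
    fix X Y
    assume "X \<in> A // R" "Y \<in> A // R" and eq: "the_elem (\<sigma> ` X) = the_elem (\<sigma> ` Y)"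
    then obtain x y where x: "x \<in> A" "X = R `` {x}" and y: "y \<in> A" "Y = R `` {y}"
      by (auto elim!: quotientE)
    then have "\<sigma> x = \<sigma> y"
      using eq class_value by simp
    then show "X = Y"
      unfolding x y using R x(1) y(1) by auto
  qed
  show "(\<lambda>X. the_elem (\<sigma> ` X)) ` (A // R) = \<sigma> ` A"
  proof
    show "(\<lambda>X. the_elem (\<sigma> ` X)) ` (A // R) \<subseteq> \<sigma> ` A"
      by (auto elim!: quotientE simp: class_value)
    show "\<sigma> ` A \<subseteq> (\<lambda>X. the_elem (\<sigma> ` X)) ` (A // R)"
    proof
      fix k assume "k \<in> \<sigma> ` A"
      then obtain x where "x \<in> A" "k = \<sigma> x" by blast
      then show "k \<in> (\<lambda>X. the_elem (\<sigma> ` X)) ` (A // R)"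
        using class_value quotientI[of x A R] by (metis image_eqI)
    qed
  qed
qed

lemma chain_maps_chadd_closed:
  assumes pos: "0 < b" "0 < c" and "f \<in> chain_maps b c" "g \<in> chain_maps b c"
  shows "chadd f g \<in> chain_maps b c"
proof -
  obtain m w m' w' where "f = chm b c m w" "g = chm b c m' w'"
    using assms chain_maps_eq[OF pos] by blast
  then show ?thesis
    using chain_map_chm[OF pos] by (simp add: chadd_chm[OF pos] chain_maps_def)
qed

lemma htpy_index_surj:
  assumes "0 < b" "0 < c"
  shows "htpy_index b c ` chain_maps b c = UNIV"
proof -
  have "k \<in> htpy_index b c ` chain_maps b c" for k
  proof (rule image_eqI)
    show "chm b c (\<lambda>i. if i = 0 then k else 0) 0 \<in> chain_maps b c"
      using chain_map_chm[OF assms] by (simp add: chain_maps_def)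
    show "k = htpy_index b c (chm b c (\<lambda>i. if i = 0 then k else 0) 0)"
      using assms by (simp add: htpy_index_chm)
  qed
  then show ?thesis
    by blast
qed

theorem proposition3p4:
  fixes n b c :: nat
  assumes "odd n" and "b dvd n" and "c dvd n"
  shows "(\<forall>m w. null_htpc b c (chm b c m w) \<longleftrightarrow>
            (\<Sum>i<gcd b c. m i) + int (gcd b c) * w = 0) \<and>
         (\<exists>\<Phi> :: chmap set \<Rightarrow> int.
            (\<forall>m w. \<Phi> (htpc_rel b c `` {chm b c m w}) = (\<Sum>i<gcd b c. m i) + int (gcd b c) * w) \<and>
            bij_betw \<Phi> (chain_maps b c // htpc_rel b c) UNIV \<and>
            (\<forall>f\<in>chain_maps b c. \<forall>g\<in>chain_maps b c.
               \<Phi> (htpc_rel b c `` {chadd f g}) =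
               \<Phi> (htpc_rel b c `` {f}) + \<Phi> (htpc_rel b c `` {g})))"
proof -
  have pos: "0 < b" "0 < c"
    using assms by (auto intro!: gr0I dest: odd_pos)
  note rel = htpc_rel_eq[OF pos]
  define \<Phi> where "\<Phi> X = the_elem (htpy_index b c ` X)" for X
  have \<Phi>_class: "\<Phi> (htpc_rel b c `` {f}) = htpy_index b c f" if "f \<in> chain_maps b c" for f
    unfolding \<Phi>_def image_class_invariant[OF rel that] by simp
  have "bij_betw \<Phi> (chain_maps b c // htpc_rel b c) UNIV"
    unfolding \<Phi>_def using bij_betw_quotient_invariant[OF rel] htpy_index_surj[OF pos] by simp
  moreover have "\<Phi> (htpc_rel b c `` {chm b c m w}) = (\<Sum>i<gcd b c. m i) + int (gcd b c) * w"
    for m w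
    using pos chain_map_chm by (simp add: \<Phi>_class chain_maps_def htpy_index_chm)
  moreover have
    "\<Phi> (htpc_rel b c `` {chadd f g}) = \<Phi> (htpc_rel b c `` {f}) + \<Phi> (htpc_rel b c `` {g})"
    if "f \<in> chain_maps b c" "g \<in> chain_maps b c" for f g
    using that by (simp add: \<Phi>_class chain_maps_chadd_closed[OF pos] htpy_index_chadd)
  ultimately show ?thesis
    using null_htpc_chm_iff[OF pos] by blast
qed

end
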